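(* Let $\Delta$ be a balanced, non-degenerate, even multiset in $\mathbb{Z}^2\setminus\{(0,0)\}$ and let $\rho>0$ be such that, for each side $\sigma$ of $P_\Delta$, the complement in $\operatorname{Tor}^+_{\mathbb{R}}(\sigma)$ of the $\rho$-neighborhoods of its endpoints is non-empty. Then the metric closure $\overline{\operatorname{Men}}{}^\rho_{\mathbb{R}}(\Delta)$ of $\operatorname{Men}^\rho_{\mathbb{R}}(\Delta)$ in $\prod_{\sigma\in P^1_\Delta}(\operatorname{Tor}^+_{\mathbb{R}}(\sigma))^{n^\sigma}$ is diffeomorphic to a convex polytope.
   Context: Notation: $\Delta$ balanced (elements sum to $0$), non-degenerate (elements span $\mathbb{R}^2$), even ($\Delta\subset(2\mathbb{Z})^2$). $P_\Delta$ is the convex lattice polygon whose counterclockwise oriented boundary is obtained by concatenating the vectors of $\Delta$ rotated counterclockwise by $\pi/2$; $P^1_\Delta$ its set of sides; for $\sigma\in P^1_\Delta$, $\boldsymbol a^\sigma_1,\dots,\boldsymbol a^\sigma_{n^\sigma}$ are the elements of $\Delta$ that are outer normals to $\sigma$, with lattice lengths $2k^\sigma_i$. $\operatorname{Tor}(P_\Delta)$ is the complex toric surface with its tautological real structure; its closed positive quadrant $\operatorname{Tor}^+_{\mathbb{R}}(P_\Delta)$ (closure of $(\mathbb{R}_{>0})^2$) is identified with $P_\Delta$ by the moment map, and it carries the metric pulled back from $P_\Delta\subset\mathbb{R}^2$. For a side $\sigma$, $\operatorname{Tor}(\sigma)$ is its toric divisor, $\operatorname{Tor}(\sigma)^\times$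 the dense orbit, and $\operatorname{Tor}^+_{\mathbb{R}}(\sigma)=\operatorname{Tor}(\sigma)\cap\partial\operatorname{Tor}^+_{\mathbb{R}}(P_\Delta)$ (a closed segment). Fix a linear functional $\lambda:\mathbb{R}^2\to\mathbb{R}$ injective on $\mathbb{Z}^2$; its maximum and minimum points on $P_\Delta$ split $\partial P_\Delta$ into two broken lines $B',B''$, and orient each side from its $\lambda$-minimal to its $\lambda$-maximal point. An automorphism of $\mathbb{Z}^2$ sending an oriented side $\sigma$ onto the segment $[0,\|\sigma\|_{\mathbb{Z}}]$ of the first axis identifies $\operatorname{Tor}(\sigma)^\times$ with $\mathbb{C}^\times$, taking the positive real half-axis of $\operatorname{Tor}(\sigma)^\times$ (the interior of $\operatorname{Tor}^+_{\mathbb{R}}(\sigma)$) onto $\mathbb{R}_{>0}$; let $\xi^\sigma_i$ be the resulting coordinate of a point $z^\sigma_i\in\operatorname{Tor}(\sigma)^\times$. Let $k_0=\gcd\{k^\sigma_i\}$. $\operatorname{Men}(\Delta)_{red}$ is the set of sequences $(z^\sigma_i)$, $z^\sigma_i\in\operatorname{Tor}(\sigma)^\times$, with $\prod_{\sigma\subset B'}\prod_i(\xi^\sigma_i)^{k^\sigma_i/k_0}=\prod_{\sigma\subset B''}\prod_i(\xi^\sigma_i)^{k^\sigma_i/k_0}$. $\operatorname{Men}^\rho_{\mathbb{R}}(\Delta)$ is the set of sequences in $\operatorname{Men}(\Delta)_{red}$ such that every point $z^\sigma_i$ lies in $\operatorname{Tor}^+_{\mathbb{R}}(\sigma)$ at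 distance $\ge\rho$ from the endpoints of $\operatorname{Tor}^+_{\mathbb{R}}(\sigma)$. *)

theory Defs
  imports "HOL-Analysis.Analysis"
begin

definition partial_deriv :: "(real^'n \<Rightarrow> real) \<Rightarrow> 'n \<Rightarrow> real^'n \<Rightarrow> real" where
  "partial_deriv g i x = frechet_derivative g (at x) (axis i 1)"

coinductive smooth_scalar_on :: "(real^'n) set \<Rightarrow> (real^'n \<Rightarrow> real) \<Rightarrow> bool"
  for U where
  "\<lbrakk> \<forall>x\<in>U. g differentiable (at x); continuous_on U g;
     \<forall>i. smooth_scalar_on U (partial_deriv g i) \<rbrakk> \<Longrightarrow> smooth_scalar_on U g"

definition smooth_map_on :: "(real^'n) set \<Rightarrow> (real^'n \<Rightarrow> real^'m) \<Rightarrow> bool" where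
  "smooth_map_on U F \<longleftrightarrow> open U \<and> (\<forall>j. smooth_scalar_on U (\<lambda>x. F x $ j))"

definition smooth_on_set :: "(real^'n) set \<Rightarrow> (real^'n \<Rightarrow> real^'m) \<Rightarrow> bool" where
  "smooth_on_set S f \<longleftrightarrow>
     (\<exists>U F. open U \<and> S \<subseteq> U \<and> smooth_map_on U F \<and> (\<forall>x\<in>S. F x = f x))"

definition diffeomorphic_sets :: "(real^'n) set \<Rightarrow> (real^'m) set \<Rightarrow> bool" where
  "diffeomorphic_sets A B \<longleftrightarrow>
     (\<exists>f g. smooth_on_set A f \<and> smooth_on_set B g \<and>
        (\<forall>x\<in>A. f x \<in> B \<and> g (f x) = x) \<and> (\<forall>y\<in>B. g y \<in> A \<and> f (g y) = y))"

text \<open>\<Delta> is given as a family D indexed by a finite type 'n (an enumeration of the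
  multiset \<Delta>, with multiplicities).\<close>

definition balanced :: "('n::finite \<Rightarrow> int \<times> int) \<Rightarrow> bool" where
  "balanced D \<longleftrightarrow> (\<Sum>i\<in>UNIV. fst (D i)) = 0 \<and> (\<Sum>i\<in>UNIV. snd (D i)) = 0"

definition nondegenerate :: "('n \<Rightarrow> int \<times> int) \<Rightarrow> bool" where
  "nondegenerate D \<longleftrightarrow> (\<exists>i j. fst (D i) * snd (D j) - snd (D i) * fst (D j) \<noteq> 0)"

definition even_family :: "('n \<Rightarrow> int \<times> int) \<Rightarrow> bool" where
  "even_family D \<longleftrightarrow> (\<forall>i. even (fst (D i)) \<and> even (snd (D i)))"

text \<open>D i and D j are outer normals of the same side of P_\<Delta> iff they are positively parallel.\<close>
definition same_side :: "('n \<Rightarrow> int \<times> int) \<Rightarrow> 'n \<Rightarrow> 'n \<Rightarrow> bool" where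
  "same_side D i j \<longleftrightarrow>
     fst (D i) * snd (D j) - snd (D i) * fst (D j) = 0 \<and>
     fst (D i) * fst (D j) + snd (D i) * snd (D j) > 0"

text \<open>Edge vector (before the rotation by pi/2) of the side \<sigma> having D i as an outer normal.\<close>
definition side_vec :: "('n::finite \<Rightarrow> int \<times> int) \<Rightarrow> 'n \<Rightarrow> int \<times> int" where
  "side_vec D i = ((\<Sum>j | same_side D i j. fst (D j)), (\<Sum>j | same_side D i j. snd (D j)))"

text \<open>Euclidean length of that side (rotation preserves length).\<close>
definition side_len :: "('n::finite \<Rightarrow> int \<times> int) \<Rightarrow> 'n \<Rightarrow> real" where
  "side_len D i = sqrt (real_of_int (fst (side_vec D i))^2 + real_of_int (snd (side_vec D i))^2)"

definition side_lat_len :: "('n::finite \<Rightarrow> int \<times> int) \<Rightarrow> 'n \<Rightarrow> nat" where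
  "side_lat_len D i = nat (gcd (fst (side_vec D i)) (snd (side_vec D i)))"

definition kval :: "('n \<Rightarrow> int \<times> int) \<Rightarrow> 'n \<Rightarrow> nat" where
  "kval D i = nat (gcd (fst (D i)) (snd (D i))) div 2"

definition k0 :: "('n \<Rightarrow> int \<times> int) \<Rightarrow> nat" where
  "k0 D = Gcd (range (kval D))"

text \<open>lambda(x,y) = c1 x + c2 y; injective on Z^2.\<close>
definition lambda_injective :: "real \<Rightarrow> real \<Rightarrow> bool" where
  "lambda_injective c1 c2 \<longleftrightarrow>
     (\<forall>m n :: int. c1 * real_of_int m + c2 * real_of_int n = 0 \<longrightarrow> m = 0 \<and> n = 0)"

text \<open>The side with outer normal D i lies in B' iff lambda increases along the
  counterclockwise boundary direction, which is D i rotated by pi/2, i.e. (-b, a).\<close>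
definition in_B1 :: "('n \<Rightarrow> int \<times> int) \<Rightarrow> real \<Rightarrow> real \<Rightarrow> 'n \<Rightarrow> bool" where
  "in_B1 D c1 c2 i \<longleftrightarrow> c1 * real_of_int (- snd (D i)) + c2 * real_of_int (fst (D i)) > 0"

text \<open>Moment map of the toric curve of the lattice segment [0,l], normalised to [0,1]:
  the point with coordinate xi > 0 goes to the fraction mu of the segment,
  measured from the lambda-minimal endpoint.\<close>
definition moment_frac :: "nat \<Rightarrow> real \<Rightarrow> real" where
  "moment_frac l \<xi> = (\<Sum>j\<le>l. real j * \<xi> ^ j) / (real l * (\<Sum>j\<le>l. \<xi> ^ j))"

text \<open>A point of Tor^+_R(\<sigma>) is described by its distance t from the lambda-minimal
  endpoint (0 \<le> t \<le> length); its coordinate xi on the positive half-axis:\<close>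
definition xi_coord :: "nat \<Rightarrow> real \<Rightarrow> real \<Rightarrow> real" where
  "xi_coord l L t = (THE \<xi>. \<xi> > 0 \<and> L * moment_frac l \<xi> = t)"

definition Men_rho :: "('n::finite \<Rightarrow> int \<times> int) \<Rightarrow> real \<Rightarrow> real \<Rightarrow> real \<Rightarrow> (real^'n) set" where
  "Men_rho D c1 c2 \<rho> =
     {t. (\<forall>i. \<rho> \<le> t $ i \<and> \<rho> \<le> side_len D i - t $ i) \<and>
         (\<Prod>i | in_B1 D c1 c2 i. xi_coord (side_lat_len D i) (side_len D i) (t $ i) ^ (kval D i div k0 D))
       = (\<Prod>i | \<not> in_B1 D c1 c2 i. xi_coord (side_lat_len D i) (side_len D i) (t $ i) ^ (kval D i div k0 D))}"

end

theory Submission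
  imports Defs
begin

(* In the coordinate u = ln xi, the moment map of a side of lattice length l and length L is
   u |-> L * moment_frac l (exp u). Its derivative is L/l times the variance of j in {0..l}
   under the weights exp (j u), hence positive; it tends to 0 at -infinity and, by the symmetry
   j |-> l - j, to L at +infinity. So it is a smooth diffeomorphism of the real line onto the
   open side (0, L), with smooth inverse. In these coordinates the monomial equation defining
   Men(Delta)_red becomes the linear equation  sum_i (+-k_i/k_0) u_i = 0  and the rho-conditions
   become a box. Hence Men^rho_R(Delta) is the image of a polytope (a box cut by a hyperplane)
   under a coordinatewise diffeomorphism; in particular it is compact, so equal to its closure. *)

fun times_differentiable_on :: "nat \<Rightarrow> real set \<Rightarrow> (real \<Rightarrow> real) \<Rightarrow> bool" where
  "times_differentiable_on 0 I f = True"
| "times_differentiable_on (Suc n) I f \<longleftrightarrow>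
     (\<forall>x\<in>I. f differentiable (at x)) \<and> times_differentiable_on n I (deriv f)"

definition smooth_real_on :: "real set \<Rightarrow> (real \<Rightarrow> real) \<Rightarrow> bool" where
  "smooth_real_on I f \<longleftrightarrow> (\<forall>n. times_differentiable_on n I f)"

lemma times_differentiable_on_cong:
  assumes "open I" "times_differentiable_on n I f" "\<And>x. x \<in> I \<Longrightarrow> f x = g x"
  shows "times_differentiable_on n I g"
  using assms(2,3)
proof (induction n arbitrary: f g)
  case (Suc n)
  have ev: "\<forall>\<^sub>F y in nhds x. f y = g y" if "x \<in> I" for x
    using Suc.prems(2) assms(1) eventually_nhds that by blast
  have "g differentiable (at x)" if x: "x \<in> I" for x
  proof -
    obtain D where "(f has_derivative D) (at x)"
      using Suc.prems(1) x by (auto simp: differentiable_def)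
    then have "(g has_derivative D) (at x)"
      using has_derivative_transform_within_open[OF _ assms(1) x] Suc.prems(2) by blast
    then show ?thesis by (auto simp: differentiable_def)
  qed
  moreover have "times_differentiable_on n I (deriv g)"
    using Suc.IH[of "deriv f" "deriv g"] Suc.prems deriv_cong_ev[OF ev] by auto
  ultimately show ?case by simp
qed simp

lemma times_differentiable_on_Suc_imp:
  "times_differentiable_on (Suc n) I f \<Longrightarrow> times_differentiable_on n I f"
  by (induction n arbitrary: f) auto

lemma times_differentiable_on_const: "times_differentiable_on n I (\<lambda>x. c)"
  by (induction n arbitrary: c) simp_all

lemma times_differentiable_on_add:
  assumes "open I"
  shows "times_differentiable_on n I f \<Longrightarrow> times_differentiable_on n I g \<Longrightarrow>
    times_differentiable_on n I (\<lambda>x. f x + g x)"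
proof (induction n arbitrary: f g)
  case (Suc n)
  have "times_differentiable_on n I (\<lambda>x. deriv f x + deriv g x)"
    using Suc by simp
  moreover have "deriv f x + deriv g x = deriv (\<lambda>x. f x + g x) x" if "x \<in> I" for x
    using Suc.prems that by (subst deriv_add) (auto simp: real_differentiable_def field_differentiable_def)
  ultimately have "times_differentiable_on n I (deriv (\<lambda>x. f x + g x))"
    by (rule times_differentiable_on_cong[OF assms])
  then show ?case using Suc.prems by auto
qed simp

lemma times_differentiable_on_mult:
  assumes "open I"
  shows "times_differentiable_on n I f \<Longrightarrow> times_differentiable_on n I g \<Longrightarrow>
    times_differentiable_on n I (\<lambda>x. f x * g x)"
proof (induction n arbitrary: f g)
  case (Suc n)
  have "times_differentiable_on n I (\<lambda>x. deriv f x * g x + f x * deriv g x)"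
    using Suc times_differentiable_on_Suc_imp times_differentiable_on_add[OF assms] by simp
  moreover have "deriv f x * g x + f x * deriv g x = deriv (\<lambda>x. f x * g x) x" if "x \<in> I" for x
    using Suc.prems that
    by (subst deriv_mult) (auto simp: real_differentiable_def field_differentiable_def algebra_simps)
  ultimately have "times_differentiable_on n I (deriv (\<lambda>x. f x * g x))"
    by (rule times_differentiable_on_cong[OF assms])
  then show ?case using Suc.prems by auto
qed simp

lemma times_differentiable_on_compose:
  assumes "open I" "open J"
  shows "\<forall>x\<in>I. g x \<in> J \<Longrightarrow> times_differentiable_on n J f \<Longrightarrow>
    times_differentiable_on n I g \<Longrightarrow> times_differentiable_on n I (\<lambda>x. f (g x))"
proof (induction n arbitrary: f g)
  case (Suc n)
  have gd: "g differentiable (at x)" if "x \<in> I" for x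
    using Suc.prems(3) that by simp
  have fd: "f differentiable (at (g x))" if "x \<in> I" for x
  proof -
    have "g x \<in> J" using Suc.prems(1) that by blast
    then show ?thesis using Suc.prems(2) by simp
  qed
  have "times_differentiable_on n I (\<lambda>x. deriv f (g x) * deriv g x)"
    using Suc times_differentiable_on_Suc_imp times_differentiable_on_mult[OF assms(1)] by simp
  moreover have "deriv f (g x) * deriv g x = deriv (\<lambda>x. f (g x)) x" if x: "x \<in> I" for x
    using fd[OF x] gd[OF x]
    by (metis DERIV_chain2 DERIV_deriv_iff_real_differentiable DERIV_imp_deriv)
  ultimately have "times_differentiable_on n I (deriv (\<lambda>x. f (g x)))"
    by (rule times_differentiable_on_cong[OF assms(1)])
  moreover have "(\<lambda>x. f (g x)) differentiable (at x)" if "x \<in> I" for x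
    using differentiable_chain_at[OF gd fd, OF that that] by (simp add: o_def)
  ultimately show ?case by simp
qed simp

lemma times_differentiable_on_inverse: "times_differentiable_on n (-{0}) inverse"
proof (induction n)
  case (Suc n)
  have "times_differentiable_on n (-{0}) (\<lambda>x. (- 1) * (inverse x * inverse x))"
    using times_differentiable_on_mult[of "-{0}"] times_differentiable_on_const Suc
    by blast
  moreover have "- 1 * (inverse x * inverse x) = deriv inverse x" if "x \<in> -{0}" for x :: real
    using that by (intro DERIV_imp_deriv[symmetric]) (auto intro!: derivative_eq_intros simp: power2_eq_square)
  ultimately have "times_differentiable_on n (-{0}) (deriv inverse)"
    by (rule times_differentiable_on_cong[rotated]) auto
  moreover have "\<forall>x\<in>-{0}. (inverse :: real \<Rightarrow> real) differentiable (at x)"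
    by (auto intro!: derivative_intros)
  ultimately show ?case by simp
qed simp

lemma smooth_real_on_imp_differentiable:
  "smooth_real_on I f \<Longrightarrow> x \<in> I \<Longrightarrow> f differentiable (at x)"
  unfolding smooth_real_on_def by (metis times_differentiable_on.simps(2))

lemma smooth_real_on_deriv: "smooth_real_on I f \<Longrightarrow> smooth_real_on I (deriv f)"
  unfolding smooth_real_on_def by (metis times_differentiable_on.simps(2))

lemma smooth_real_on_const: "smooth_real_on I (\<lambda>x. c)"
  unfolding smooth_real_on_def by (simp add: times_differentiable_on_const)

lemma smooth_real_on_inverse_function:
  assumes I: "open I" and J: "open J" and g: "smooth_real_on I g"
    and hg: "\<And>x. x \<in> I \<Longrightarrow> h (g x) = x"
    and gh: "\<And>t. t \<in> J \<Longrightarrow> h t \<in> I \<and> g (h t) = t"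
    and nz: "\<And>x. x \<in> I \<Longrightarrow> deriv g x \<noteq> 0"
  shows "smooth_real_on J h"
proof -
  have dg: "(g has_real_derivative deriv g x) (at x)" if "x \<in> I" for x
    using smooth_real_on_imp_differentiable[OF g that] DERIV_deriv_iff_real_differentiable by blast
  then have "continuous_on I g"
    by (meson DERIV_isCont continuous_at_imp_continuous_on)
  have dh: "(h has_real_derivative inverse (deriv g (h t))) (at t)" if t: "t \<in> J" for t
  proof -
    have "(g has_derivative (*) (deriv g (h t))) (at (h t))"
      using dg gh t by (simp add: has_field_derivative_def)
    then have "(h has_derivative (*) (inverse (deriv g (h t)))) (at (g (h t)))"
      using has_derivative_inverse_strong[of I "h t" g h] \<open>continuous_on I g\<close> I gh hg nz t
      by (auto simp: fun_eq_iff)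
    then have "(h has_real_derivative inverse (deriv g (h t))) (at (g (h t)))"
      by (simp add: has_field_derivative_def mult.commute)
    then show ?thesis using gh t by simp
  qed
  show ?thesis unfolding smooth_real_on_def
  proof
    fix n show "times_differentiable_on n J h"
    proof (induction n)
      case (Suc n)
      have deriv_gh: "times_differentiable_on n J (\<lambda>t. deriv g (h t))"
        using times_differentiable_on_compose[OF J I] Suc gh smooth_real_on_deriv[OF g]
        by (simp add: smooth_real_on_def)
      have "\<forall>t\<in>J. deriv g (h t) \<in> -{0}"
        using nz gh by blast
      then have "times_differentiable_on n J (\<lambda>t. inverse (deriv g (h t)))"
        by (rule times_differentiable_on_compose[OF J open_Compl[OF closed_singleton] _
              times_differentiable_on_inverse deriv_gh])
      moreover have "inverse (deriv g (h t)) = deriv h t" if "t \<in> J" for t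
        using dh that DERIV_imp_deriv by metis
      ultimately have "times_differentiable_on n J (deriv h)"
        by (rule times_differentiable_on_cong[OF J])
      moreover have "\<forall>t\<in>J. h differentiable (at t)"
        using dh real_differentiable_def by blast
      ultimately show ?case by simp
    qed simp
  qed
qed

lemma smooth_scalar_on_component:
  fixes U :: "(real^'n) set"
  assumes U: "open U" and I: "open I" and f: "smooth_real_on I f"
    and UI: "\<And>x. x \<in> U \<Longrightarrow> x $ i \<in> I"
  shows "smooth_scalar_on U (\<lambda>x. f (x $ i))"
proof -
  \<comment> \<open>Functions of the single coordinate x $ i form a class closed under partial derivatives.\<close>
  define X where "X g \<longleftrightarrow> (\<exists>f. smooth_real_on I f \<and> (\<forall>x\<in>U. g x = f (x $ i)))" for g
  have "X (\<lambda>x. f (x $ i))" unfolding X_def using f by blast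
  then show ?thesis
  proof (rule smooth_scalar_on.coinduct[where X = X])
    fix g assume "X g"
    then obtain f where f: "smooth_real_on I f" and g: "\<And>x. x \<in> U \<Longrightarrow> g x = f (x $ i)"
      unfolding X_def by blast
    have df: "(f has_derivative (\<lambda>y. deriv f (x $ i) * y)) (at (x $ i))" if "x \<in> U" for x
      using smooth_real_on_imp_differentiable[OF f UI[OF that]]
      by (simp add: DERIV_deriv_iff_real_differentiable flip: has_field_derivative_def)
    have dg: "(g has_derivative (\<lambda>h. deriv f (x $ i) * h $ i)) (at x)" if x: "x \<in> U" for x
    proof (rule has_derivative_transform_within_open[OF _ U x])
      show "((\<lambda>x. f (x $ i)) has_derivative (\<lambda>h. deriv f (x $ i) * h $ i)) (at x)"
        using diff_chain_at[OF bounded_linear_imp_has_derivative[OF bounded_linear_vec_nth] df[OF x]]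
        by (simp add: o_def)
    qed (use g in simp)
    have "X (partial_deriv g k)" for k
    proof -
      define f' where "f' = (if k = i then deriv f else (\<lambda>_. 0))"
      have "smooth_real_on I f'"
        using smooth_real_on_deriv[OF f] smooth_real_on_const by (simp add: f'_def)
      moreover have "partial_deriv g k x = f' (x $ i)" if "x \<in> U" for x
        using frechet_derivative_at[OF dg[OF that], symmetric]
        by (simp add: partial_deriv_def f'_def axis_def)
      ultimately show ?thesis unfolding X_def by blast
    qed
    moreover have "\<forall>x\<in>U. g differentiable (at x)"
      using dg differentiable_def by blast
    moreover from this have "continuous_on U g"
      using differentiable_imp_continuous_within continuous_at_imp_continuous_on by blast
    ultimately show "\<exists>g'. g = g' \<and> (\<forall>x\<in>U. g' differentiable at x) \<and> continuous_on U g' \<and>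
        (\<forall>k. X (partial_deriv g' k) \<or> smooth_scalar_on U (partial_deriv g' k))"
      by blast
  qed
qed

lemma smooth_on_set_vec_lambda:
  fixes S :: "(real^'n::finite) set"
  assumes I: "\<And>i. open (I i)" and h: "\<And>i. smooth_real_on (I i) (h i)"
    and S: "\<And>x i. x \<in> S \<Longrightarrow> x $ i \<in> I i"
  shows "smooth_on_set S (\<lambda>x. \<chi> i. h i (x $ i))"
  unfolding smooth_on_set_def
proof (intro exI conjI)
  let ?U = "\<Inter>i. (\<lambda>x. x $ i) -` I i"
  show U: "open ?U"
    by (rule open_INT) (simp_all add: open_vimage_vec_nth I)
  show "smooth_map_on ?U (\<lambda>x. \<chi> i. h i (x $ i))"
  proof -
    have "smooth_scalar_on ?U (\<lambda>x. h j (x $ j))" for j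
      by (rule smooth_scalar_on_component[OF U I h]) simp
    then show ?thesis unfolding smooth_map_on_def using U by simp
  qed
qed (use S in auto)

lemma polytope_box_Int_hyperplane:
  fixes c :: "real^'n"
  shows "polytope {u. (\<forall>i. a i \<le> u $ i \<and> u $ i \<le> b i) \<and> c \<bullet> u = 0}"
proof -
  have "{u. (\<forall>i. a i \<le> u $ i \<and> u $ i \<le> b i) \<and> c \<bullet> u = 0}
      = cbox (\<chi> i. a i) (\<chi> i. b i) \<inter> {u. c \<bullet> u = 0}"
    by (auto simp: mem_box_cart)
  then show ?thesis
    by (simp add: polytope_Int_polyhedron polytope_interval polyhedron_hyperplane)
qed

definition exp_moment :: "nat \<Rightarrow> nat \<Rightarrow> real \<Rightarrow> real" where
  "exp_moment k l u = (\<Sum>j\<le>l. real j ^ k * exp u ^ j)"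

lemma has_real_derivative_exp_moment:
  "(exp_moment k l has_real_derivative exp_moment (Suc k) l u) (at u)"
  unfolding exp_moment_def
  by (rule derivative_eq_intros refl sum.cong)+ (auto simp: power_Suc2 power_eq_if)

lemma exp_moment_0_pos: "0 < exp_moment 0 l u"
  unfolding exp_moment_def by (rule sum_pos2[of _ 0]) auto

lemma smooth_real_on_exp_moment: "smooth_real_on I (exp_moment k l)"
  unfolding smooth_real_on_def
proof
  fix n show "times_differentiable_on n I (exp_moment k l)"
  proof (induction n arbitrary: k)
    case (Suc n)
    have "deriv (exp_moment k l) = exp_moment (Suc k) l"
      using has_real_derivative_exp_moment DERIV_imp_deriv by blast
    then show ?case
      using Suc has_real_derivative_exp_moment real_differentiable_def by (simp, blast)
  qed simp
qed

lemma exp_moment_uminus: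
  "exp u ^ l * exp_moment k l (- u) = (\<Sum>j\<le>l. real (l - j) ^ k * exp u ^ j)"
proof -
  have "exp u ^ l * exp_moment k l (- u) = (\<Sum>j\<le>l. real j ^ k * exp u ^ (l - j))"
    unfolding exp_moment_def sum_distrib_left
    by (intro sum.cong) (auto simp: exp_minus power_inverse field_simps simp flip: power_add)
  also have "\<dots> = (\<Sum>j\<le>l. real (l - j) ^ k * exp u ^ j)"
    by (subst sum.atLeastAtMost_rev[of _ 0 l, unfolded atMost_atLeast0[symmetric]]) (auto intro!: sum.cong)
  finally show ?thesis .
qed

lemma sum_sum_sq_diff:
  fixes x w :: "'a \<Rightarrow> real"
  shows "(\<Sum>j\<in>S. \<Sum>k\<in>S. (x j - x k)\<^sup>2 * w j * w k)
     = 2 * ((\<Sum>j\<in>S. (x j)\<^sup>2 * w j) * (\<Sum>j\<in>S. w j) - (\<Sum>j\<in>S. x j * w j)\<^sup>2)"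
proof -
  have pointwise: "(x j - x k)\<^sup>2 * w j * w k
      = ((x j)\<^sup>2 * w j) * w k + w j * ((x k)\<^sup>2 * w k) - 2 * ((x j * w j) * (x k * w k))" for j k
    by (simp add: power2_eq_square algebra_simps)
  have "(\<Sum>j\<in>S. \<Sum>k\<in>S. (x j - x k)\<^sup>2 * w j * w k)
      = (\<Sum>j\<in>S. \<Sum>k\<in>S. ((x j)\<^sup>2 * w j) * w k) + (\<Sum>j\<in>S. \<Sum>k\<in>S. w j * ((x k)\<^sup>2 * w k))
        - 2 * (\<Sum>j\<in>S. \<Sum>k\<in>S. (x j * w j) * (x k * w k))"
    by (simp only: pointwise sum.distrib sum_subtractf sum_distrib_left[symmetric])
  also have "\<dots> = 2 * ((\<Sum>j\<in>S. (x j)\<^sup>2 * w j) * (\<Sum>j\<in>S. w j) - (\<Sum>j\<in>S. x j * w j)\<^sup>2)"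
    by (simp only: sum_product[symmetric]) (simp add: power2_eq_square algebra_simps)
  finally show ?thesis .
qed

lemma exp_moment_variance_pos:
  assumes "1 \<le> l"
  shows "(exp_moment 1 l u)\<^sup>2 < exp_moment 2 l u * exp_moment 0 l u"
proof -
  let ?w = "\<lambda>j. exp u ^ j"
  have "0 < (\<Sum>j\<le>l. \<Sum>k\<le>l. (real j - real k)\<^sup>2 * ?w j * ?w k)"
  proof (rule sum_pos2[of _ 0])
    show "0 < (\<Sum>k\<le>l. (real 0 - real k)\<^sup>2 * ?w 0 * ?w k)"
      by (rule sum_pos2[of _ 1]) (use assms in auto)
  qed (auto intro!: sum_nonneg)
  then show ?thesis
    using sum_sum_sq_diff[of real ?w "{..l}"] by (simp add: exp_moment_def mult.commute)
qed

definition log_moment :: "nat \<Rightarrow> real \<Rightarrow> real \<Rightarrow> real" where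
  "log_moment l L u = L * moment_frac l (exp u)"

definition log_moment_inv :: "nat \<Rightarrow> real \<Rightarrow> real \<Rightarrow> real" where
  "log_moment_inv l L t = (THE u. log_moment l L u = t)"

lemma log_moment_eq_exp_moment:
  "log_moment l L u = L * exp_moment 1 l u / (real l * exp_moment 0 l u)"
  by (simp add: log_moment_def moment_frac_def exp_moment_def)

context
  fixes l :: nat and L :: real
  assumes l: "1 \<le> l" and L: "0 < L"
begin

lemma has_real_derivative_log_moment:
  "(log_moment l L has_real_derivative
     L * (exp_moment 2 l u * exp_moment 0 l u - (exp_moment 1 l u)\<^sup>2)
       / (real l * (exp_moment 0 l u)\<^sup>2)) (at u)"
proof -
  have "0 < real l" "0 < exp_moment 0 l u" using l exp_moment_0_pos[of l u] by simp_all
  then have "((\<lambda>u. L * exp_moment 1 l u / (real l * exp_moment 0 l u)) has_real_derivative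
     L * (exp_moment 2 l u * exp_moment 0 l u - (exp_moment 1 l u)\<^sup>2)
       / (real l * (exp_moment 0 l u)\<^sup>2)) (at u)"
    by (auto intro!: derivative_eq_intros has_real_derivative_exp_moment
        simp: power2_eq_square field_simps numeral_2_eq_2)
  then show ?thesis by (simp add: log_moment_eq_exp_moment[abs_def])
qed

lemma log_moment_derivative_pos:
  "0 < L * (exp_moment 2 l u * exp_moment 0 l u - (exp_moment 1 l u)\<^sup>2)
         / (real l * (exp_moment 0 l u)\<^sup>2)"
  using exp_moment_variance_pos[OF l, of u] l L exp_moment_0_pos[of l u]
  by (intro divide_pos_pos mult_pos_pos) simp_all

lemma strict_mono_log_moment: "strict_mono (log_moment l L)"
proof (rule strict_monoI)
  fix u v :: real assume "u < v"
  then show "log_moment l L u < log_moment l L v"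
    by (rule DERIV_pos_imp_increasing)
       (use has_real_derivative_log_moment log_moment_derivative_pos in blast)
qed

lemma continuous_log_moment: "continuous_on A (log_moment l L)"
  by (rule continuous_at_imp_continuous_on) (use DERIV_isCont has_real_derivative_log_moment in blast)

lemma log_moment_uminus: "log_moment l L (- u) = L - log_moment l L u"
proof -
  have M1: "exp u ^ l * exp_moment 1 l (- u) = real l * exp_moment 0 l u - exp_moment 1 l u"
    and M0: "exp u ^ l * exp_moment 0 l (- u) = exp_moment 0 l u"
    unfolding exp_moment_uminus by (auto simp: exp_moment_def sum_distrib_left sum_subtractf
        left_diff_distrib intro!: sum.cong)
  have "log_moment l L (- u)
      = L * (exp u ^ l * exp_moment 1 l (- u)) / (real l * (exp u ^ l * exp_moment 0 l (- u)))"
    by (simp add: log_moment_eq_exp_moment)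
  also have "\<dots> = L * (real l * exp_moment 0 l u - exp_moment 1 l u) / (real l * exp_moment 0 l u)"
    by (simp only: M0 M1)
  also have "\<dots> = L - log_moment l L u"
    using l exp_moment_0_pos[of l u] by (simp add: log_moment_eq_exp_moment field_simps)
  finally show ?thesis .
qed

lemma log_moment_tendsto_at_bot: "(log_moment l L \<longlongrightarrow> 0) at_bot"
proof -
  have "((\<lambda>u. L * moment_frac l (exp u)) \<longlongrightarrow> L * moment_frac l 0) at_bot"
    unfolding moment_frac_def
    by (rule tendsto_intros exp_at_bot)+ (use l in \<open>auto simp: power_0_left\<close>)
  moreover have "moment_frac l 0 = 0"
    unfolding moment_frac_def by (auto simp: power_0_left intro!: sum.neutral)
  ultimately show ?thesis by (simp add: log_moment_def[abs_def])
qed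

lemma log_moment_tendsto_at_top: "(log_moment l L \<longlongrightarrow> L) at_top"
proof -
  have "((\<lambda>u. L - log_moment l L (- u)) \<longlongrightarrow> L - 0) at_top"
    by (intro tendsto_intros filterlim_compose[OF log_moment_tendsto_at_bot filterlim_uminus_at_bot_at_top])
  then show ?thesis by (simp add: log_moment_uminus)
qed

lemma log_moment_surj:
  assumes "0 < t" "t < L"
  shows "\<exists>u. log_moment l L u = t"
proof -
  obtain a where a: "log_moment l L a < t"
    using order_tendstoD(2)[OF log_moment_tendsto_at_bot assms(1)] by (auto simp: eventually_at_bot_linorder)
  obtain b where b: "t < log_moment l L b"
    using order_tendstoD(1)[OF log_moment_tendsto_at_top assms(2)] by (auto simp: eventually_at_top_linorder)
  have "a < b"
    using a b strict_mono_less[OF strict_mono_log_moment] by (meson less_trans)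
  then show ?thesis
    using IVT'[OF less_imp_le[OF a] less_imp_le[OF b] less_imp_le continuous_log_moment] by blast
qed

lemma log_moment_inv_log_moment: "log_moment_inv l L (log_moment l L u) = u"
  unfolding log_moment_inv_def
  using strict_mono_eq[OF strict_mono_log_moment] by (intro the_equality) auto

lemma log_moment_log_moment_inv:
  "0 < t \<Longrightarrow> t < L \<Longrightarrow> log_moment l L (log_moment_inv l L t) = t"
  using log_moment_surj log_moment_inv_log_moment by metis

lemma log_moment_inv_le_iff:
  "0 < s \<Longrightarrow> s < L \<Longrightarrow> log_moment_inv l L s \<le> u \<longleftrightarrow> s \<le> log_moment l L u"
  using strict_mono_less_eq[OF strict_mono_log_moment] log_moment_log_moment_inv
  by metis

lemma le_log_moment_inv_iff:
  "0 < s \<Longrightarrow> s < L \<Longrightarrow> u \<le> log_moment_inv l L s \<longleftrightarrow> log_moment l L u \<le> s"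
  using strict_mono_less_eq[OF strict_mono_log_moment] log_moment_log_moment_inv
  by metis

lemma smooth_real_on_log_moment: "smooth_real_on UNIV (log_moment l L)"
  unfolding smooth_real_on_def
proof
  fix n
  have M: "times_differentiable_on n UNIV (exp_moment k l)" for k
    using smooth_real_on_exp_moment smooth_real_on_def by blast
  have "\<forall>u\<in>UNIV. real l * exp_moment 0 l u \<in> -{0}"
    using l exp_moment_0_pos[of l] by (simp add: less_imp_neq[symmetric])
  then have "times_differentiable_on n UNIV (\<lambda>u. inverse (real l * exp_moment 0 l u))"
    by (rule times_differentiable_on_compose[OF open_UNIV open_Compl[OF closed_singleton] _
          times_differentiable_on_inverse times_differentiable_on_mult[OF _ times_differentiable_on_const M]])
      simp_all
  then have "times_differentiable_on n UNIV
      (\<lambda>u. L * exp_moment 1 l u * inverse (real l * exp_moment 0 l u))"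
    by (intro times_differentiable_on_mult times_differentiable_on_const M) simp_all
  then show "times_differentiable_on n UNIV (log_moment l L)"
    by (rule times_differentiable_on_cong[OF open_UNIV])
       (simp add: log_moment_eq_exp_moment divide_inverse)
qed

lemma smooth_real_on_log_moment_inv: "smooth_real_on {0<..<L} (log_moment_inv l L)"
proof (rule smooth_real_on_inverse_function[OF open_UNIV _ smooth_real_on_log_moment])
  fix u
  show "deriv (log_moment l L) u \<noteq> 0"
    using DERIV_imp_deriv[OF has_real_derivative_log_moment] log_moment_derivative_pos
    by (metis less_irrefl)
qed (auto simp: log_moment_inv_log_moment log_moment_log_moment_inv)

lemma xi_coord_eq_exp_log_moment_inv:
  assumes "0 < t" "t < L"
  shows "xi_coord l L t = exp (log_moment_inv l L t)"
  unfolding xi_coord_def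
proof (rule the_equality)
  show "0 < exp (log_moment_inv l L t) \<and> L * moment_frac l (exp (log_moment_inv l L t)) = t"
    using log_moment_log_moment_inv[OF assms] by (simp add: log_moment_def)
next
  fix \<xi> assume "0 < \<xi> \<and> L * moment_frac l \<xi> = t"
  then show "\<xi> = exp (log_moment_inv l L t)"
    using log_moment_inv_log_moment[of "ln \<xi>"] by (simp add: log_moment_def)
qed

end

definition log_chart :: "('n \<Rightarrow> nat) \<Rightarrow> ('n \<Rightarrow> real) \<Rightarrow> real^'n \<Rightarrow> real^'n" where
  "log_chart l L t = (\<chi> i. log_moment_inv (l i) (L i) (t $ i))"

definition moment_chart :: "('n \<Rightarrow> nat) \<Rightarrow> ('n \<Rightarrow> real) \<Rightarrow> real^'n \<Rightarrow> real^'n" where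
  "moment_chart l L u = (\<chi> i. log_moment (l i) (L i) (u $ i))"

lemma log_slice_diffeomorphic_polytope:
  fixes l :: "'n::finite \<Rightarrow> nat" and c :: "real^'n"
  assumes l: "\<And>i. 1 \<le> l i" and \<rho>: "0 < \<rho>" and L: "\<And>i. 2 * \<rho> \<le> L i"
  defines "S \<equiv> {t. (\<forall>i. \<rho> \<le> t $ i \<and> \<rho> \<le> L i - t $ i) \<and> c \<bullet> log_chart l L t = 0}"
  shows "compact S \<and> (\<exists>P :: (real^'n) set. polytope P \<and> diffeomorphic_sets S P)"
proof -
  have L_pos: "0 < L i" and \<rho>_less: "\<rho> < L i" "L i - \<rho> < L i" "0 < L i - \<rho>" for i
    using L[of i] \<rho> by auto
  define P where "P = {u. (\<forall>i. log_moment_inv (l i) (L i) \<rho> \<le> u $ i \<and>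
      u $ i \<le> log_moment_inv (l i) (L i) (L i - \<rho>)) \<and> c \<bullet> u = 0}"
  have in_P_iff: "u \<in> P \<longleftrightarrow> moment_chart l L u \<in> S \<and> log_chart l L (moment_chart l L u) = u" for u
    by (simp add: P_def S_def moment_chart_def log_chart_def
        log_moment_inv_le_iff[OF l L_pos \<rho> \<rho>_less(1)] le_log_moment_inv_iff[OF l L_pos \<rho>_less(3,2)]
        log_moment_inv_log_moment[OF l L_pos] vec_eq_iff algebra_simps)
  have S_box: "0 < t $ i \<and> t $ i < L i" if "t \<in> S" for t i
  proof -
    have "\<rho> \<le> t $ i" "\<rho> \<le> L i - t $ i" using that by (auto simp: S_def)
    then show ?thesis using \<rho> by linarith
  qed
  then have chart_inverse: "t \<in> S \<Longrightarrow> moment_chart l L (log_chart l L t) = t" for t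
    by (simp add: moment_chart_def log_chart_def vec_eq_iff log_moment_log_moment_inv[OF l L_pos])
  have S_eq: "S = moment_chart l L ` P"
  proof
    show "S \<subseteq> moment_chart l L ` P"
      using chart_inverse in_P_iff by (metis image_eqI subsetI)
  qed (use in_P_iff in blast)
  have "polytope P"
    unfolding P_def by (rule polytope_box_Int_hyperplane)
  moreover from this have "compact S"
    unfolding S_eq moment_chart_def
    by (intro compact_continuous_image continuous_on_vec_lambda continuous_on_compose2[OF
          continuous_log_moment[OF l L_pos] continuous_on_component[OF continuous_on_id]]
          polytope_imp_compact) auto
  moreover have "diffeomorphic_sets S P"
    unfolding diffeomorphic_sets_def
  proof (intro exI conjI)
    show "smooth_on_set S (log_chart l L)"
      unfolding log_chart_def
      by (rule smooth_on_set_vec_lambda[where I = "\<lambda>i. {0<..<L i}"])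
         (auto simp: S_box smooth_real_on_log_moment_inv[OF l L_pos])
    show "smooth_on_set P (moment_chart l L)"
      unfolding moment_chart_def
      by (rule smooth_on_set_vec_lambda[where I = "\<lambda>i. UNIV"])
         (auto simp: smooth_real_on_log_moment[OF l L_pos])
  qed (use chart_inverse in_P_iff in auto)
  ultimately show ?thesis by blast
qed

lemma prod_exp_power_eq_iff:
  fixes u :: "real^'n::finite" and m :: "'n \<Rightarrow> nat"
  shows "(\<Prod>i | B i. exp (u $ i) ^ m i) = (\<Prod>i | \<not> B i. exp (u $ i) ^ m i)
    \<longleftrightarrow> (\<chi> i. (if B i then 1 else - 1) * real (m i)) \<bullet> u = 0"
proof -
  have "(\<chi> i. (if B i then 1 else - 1) * real (m i)) \<bullet> u
      = (\<Sum>i | B i. real (m i) * u $ i) - (\<Sum>i | \<not> B i. real (m i) * u $ i)"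
    unfolding inner_vec_def
    by (simp add: sum.If_cases Collect_neg_eq sum_negf if_distrib[of "\<lambda>x. x * _"])
  then show ?thesis
    by (simp flip: exp_of_nat_mult exp_sum)
qed

lemma side_lat_len_ge_1:
  fixes D :: "'n::finite \<Rightarrow> int \<times> int"
  assumes "D i \<noteq> (0, 0)"
  shows "1 \<le> side_lat_len D i"
proof -
  let ?a = "fst (D i)" and ?b = "snd (D i)"
  have "0 < ?a * ?a + ?b * ?b"
    using assms sum_squares_gt_zero_iff[of ?a ?b] by (metis prod.collapse)
  then have "0 < (\<Sum>j | same_side D i j. ?a * fst (D j) + ?b * snd (D j))"
    by (intro sum_pos2[of _ i]) (auto simp: same_side_def less_imp_le)
  also have "\<dots> = ?a * fst (side_vec D i) + ?b * snd (side_vec D i)"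
    by (simp add: side_vec_def sum_distrib_left sum.distrib)
  finally have "side_vec D i \<noteq> (0, 0)" by auto
  then have "gcd (fst (side_vec D i)) (snd (side_vec D i)) \<noteq> 0"
    by (metis gcd_eq_0_iff prod.collapse)
  then have "0 < gcd (fst (side_vec D i)) (snd (side_vec D i))"
    by (simp add: order_le_neq_trans)
  then show ?thesis
    unfolding side_lat_len_def by linarith
qed

definition signed_exponents :: "('n::finite \<Rightarrow> int \<times> int) \<Rightarrow> real \<Rightarrow> real \<Rightarrow> real^'n" where
  "signed_exponents D c1 c2 = (\<chi> i. (if in_B1 D c1 c2 i then 1 else - 1) * real (kval D i div k0 D))"

lemma Men_rho_eq_log_slice:
  assumes "\<forall>i. D i \<noteq> (0, 0)" "0 < \<rho>"
  shows "Men_rho D c1 c2 \<rho> = {t. (\<forall>i. \<rho> \<le> t $ i \<and> \<rho> \<le> side_len D i - t $ i) \<and>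
    signed_exponents D c1 c2 \<bullet> log_chart (side_lat_len D) (side_len D) t = 0}"
proof -
  have "xi_coord (side_lat_len D i) (side_len D i) (t $ i)
      = exp (log_chart (side_lat_len D) (side_len D) t $ i)"
    if "\<rho> \<le> t $ i" "\<rho> \<le> side_len D i - t $ i" for t i
    using that assms xi_coord_eq_exp_log_moment_inv[OF side_lat_len_ge_1, of D i "side_len D i" "t $ i"]
    by (simp add: log_chart_def)
  then show ?thesis
    unfolding Men_rho_def signed_exponents_def
    by (auto simp: prod_exp_power_eq_iff[symmetric] cong: prod.cong)
qed

theorem lemma2p3:
  fixes D :: "'n::finite \<Rightarrow> int \<times> int" and c1 c2 \<rho> :: real
  assumes "\<forall>i. D i \<noteq> (0, 0)"
    and "balanced D" and "nondegenerate D" and "even_family D"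
    and "lambda_injective c1 c2"
    and "\<rho> > 0"
    and "\<forall>i. {t::real. 0 \<le> t \<and> t \<le> side_len D i \<and> \<rho> \<le> t \<and> \<rho> \<le> side_len D i - t} \<noteq> {}"
  shows "\<exists>P :: (real^'n) set. polytope P \<and> diffeomorphic_sets (closure (Men_rho D c1 c2 \<rho>)) P"
proof -
  have "1 \<le> side_lat_len D i" for i
    using assms(1) side_lat_len_ge_1 by blast
  moreover have "2 * \<rho> \<le> side_len D i" for i
  proof -
    obtain t where "\<rho> \<le> t" "\<rho> \<le> side_len D i - t" using assms(7) by blast
    then show ?thesis by simp
  qed
  ultimately have "compact (Men_rho D c1 c2 \<rho>) \<and>
      (\<exists>P :: (real^'n) set. polytope P \<and> diffeomorphic_sets (Men_rho D c1 c2 \<rho>) P)"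
    unfolding Men_rho_eq_log_slice[OF assms(1,6)]
    by (rule log_slice_diffeomorphic_polytope[OF _ assms(6)])
  then show ?thesis
    using compact_imp_closed closure_closed by metis
qed

end
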